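(* Consider an instance of the robust flow design problem on a directed graph $D=(V,A)$ with source $s$, sink $t$, capacities $u\in\mathbb{R}_+^A$, protection cost coefficients $\gamma\in\mathbb{R}_+^A$, flow player budget $B_F>0$ and interdictor budget $B_I\ge0$. Let $x$ be an optimal solution of the linear program $[\mathrm{LP}_{\mathrm{design}}]$: maximize $\sum_{P\in\mathcal{P}}\big(1-\frac{B_I}{B_F}\sum_{e\in P}\gamma_e\big)x_P$ subject to $\sum_{P\in\mathcal{P}:e\in P}x_P\le u_e$ for all $e\in A$ and $x_P\ge0$ for all $P\in\mathcal{P}$. Then $x$ is an optimal flow for the flow player in the design problem, i.e. there exist interdiction costs $c$ such that $(x,c)$ is an optimal solution of the design problem.
   Context: $\mathcal{P}$ is the set of $s$-$t$-paths in $D$ and $X=\{x\in\mathbb{R}_+^{\mathcal{P}}:\sum_{P\ni e}x_P\le u_e\ \forall e\in A\}$. In the design problem the flow player chooses $x\in X$ and interdiction costs $c\in\mathbb{R}_+^A$ subject to $\sum_{e\in A}\gamma_e c_e\sum_{P\in\mathcal{P}:e\in P}x_P\le B_F$; for arcs with $\gamma_e=0$ one has $c_e=\infty$ (flow cannot be stolen there). The interdictor then chooses $z\in\mathbb{R}_+^{A\times\mathcal{P}}$ with $\sum_{e\in A}c_e\sum_{P\ni e}z_{e,P}\le B_I$ (and $z_{e,P}=0$ if $c_e=\infty$), and the value is $\mathrm{val}(x,z)=\sum_{P\in\mathcal{P}}(x_P-\sum_{e\in P}z_{e,P})^+$. An optimal solution is a feasible pair $(x,c)$ maximizing $\min_z\mathrm{val}(x,z)$.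 *)

theory Defs
  imports Main "HOL-Library.Extended_Real"
begin

definition is_st_path ::
  "'e set \<Rightarrow> ('e \<Rightarrow> 'v) \<Rightarrow> ('e \<Rightarrow> 'v) \<Rightarrow> 'v \<Rightarrow> 'v \<Rightarrow> 'e list \<Rightarrow> bool" where
  "is_st_path A tail head s t P \<longleftrightarrow>
     P \<noteq> [] \<and> set P \<subseteq> A \<and> tail (P ! 0) = s \<and> head (last P) = t \<and>
     (\<forall>i. Suc i < length P \<longrightarrow> head (P ! i) = tail (P ! Suc i)) \<and>
     distinct (s # map head P)"

definition st_paths :: "'e set \<Rightarrow> ('e \<Rightarrow> 'v) \<Rightarrow> ('e \<Rightarrow> 'v) \<Rightarrow> 'v \<Rightarrow> 'v \<Rightarrow> 'e list set" where
  "st_paths A tail head s t = {P. is_st_path A tail head s t P}"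

definition arc_flow :: "'e list set \<Rightarrow> ('e list \<Rightarrow> real) \<Rightarrow> 'e \<Rightarrow> real" where
  "arc_flow \<P> x e = (\<Sum>P\<in>{P\<in>\<P>. e \<in> set P}. x P)"

definition feasible_flow :: "'e set \<Rightarrow> 'e list set \<Rightarrow> ('e \<Rightarrow> real) \<Rightarrow> ('e list \<Rightarrow> real) \<Rightarrow> bool" where
  "feasible_flow A \<P> u x \<longleftrightarrow> (\<forall>P\<in>\<P>. 0 \<le> x P) \<and> (\<forall>e\<in>A. arc_flow \<P> x e \<le> u e)"

definition lp_design_obj ::
  "'e list set \<Rightarrow> ('e \<Rightarrow> real) \<Rightarrow> real \<Rightarrow> real \<Rightarrow> ('e list \<Rightarrow> real) \<Rightarrow> real" where
  "lp_design_obj \<P> \<gamma> BF BI x = (\<Sum>P\<in>\<P>. (1 - BI / BF * (\<Sum>e\<in>set P. \<gamma> e)) * x P)"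

definition lp_design_optimal ::
  "'e set \<Rightarrow> 'e list set \<Rightarrow> ('e \<Rightarrow> real) \<Rightarrow> ('e \<Rightarrow> real) \<Rightarrow> real \<Rightarrow> real \<Rightarrow> ('e list \<Rightarrow> real) \<Rightarrow> bool" where
  "lp_design_optimal A \<P> u \<gamma> BF BI x \<longleftrightarrow> feasible_flow A \<P> u x \<and>
     (\<forall>x'. feasible_flow A \<P> u x' \<longrightarrow> lp_design_obj \<P> \<gamma> BF BI x' \<le> lp_design_obj \<P> \<gamma> BF BI x)"

text \<open>Interdiction costs take values in [0,\<infinity>]; arcs with \<gamma>_e = 0 must have cost \<infinity>.
  Products follow the usual convention 0 \<cdot> \<infinity> = 0 (as for ereal multiplication).\<close>
definition feasible_design ::
  "'e set \<Rightarrow> 'e list set \<Rightarrow> ('e \<Rightarrow> real) \<Rightarrow> ('e \<Rightarrow> real) \<Rightarrow> real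
     \<Rightarrow> ('e list \<Rightarrow> real) \<Rightarrow> ('e \<Rightarrow> ereal) \<Rightarrow> bool" where
  "feasible_design A \<P> u \<gamma> BF x c \<longleftrightarrow> feasible_flow A \<P> u x \<and>
     (\<forall>e\<in>A. 0 \<le> c e) \<and> (\<forall>e\<in>A. \<gamma> e = 0 \<longrightarrow> c e = \<infinity>) \<and>
     (\<forall>e\<in>A. \<gamma> e \<noteq> 0 \<longrightarrow> c e \<noteq> \<infinity>) \<and>
     (\<Sum>e\<in>A. ereal (\<gamma> e) * c e * ereal (arc_flow \<P> x e)) \<le> ereal BF"

definition feasible_interdiction ::
  "'e set \<Rightarrow> 'e list set \<Rightarrow> real \<Rightarrow> ('e \<Rightarrow> ereal) \<Rightarrow> ('e \<Rightarrow> 'e list \<Rightarrow> real) \<Rightarrow> bool" where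
  "feasible_interdiction A \<P> BI c z \<longleftrightarrow>
     (\<forall>e\<in>A. \<forall>P\<in>\<P>. 0 \<le> z e P) \<and>
     (\<forall>e\<in>A. \<forall>P\<in>\<P>. c e = \<infinity> \<longrightarrow> z e P = 0) \<and>
     (\<Sum>e\<in>A. c e * ereal (\<Sum>P\<in>{P\<in>\<P>. e \<in> set P}. z e P)) \<le> ereal BI"

definition val :: "'e list set \<Rightarrow> ('e list \<Rightarrow> real) \<Rightarrow> ('e \<Rightarrow> 'e list \<Rightarrow> real) \<Rightarrow> real" where
  "val \<P> x z = (\<Sum>P\<in>\<P>. max 0 (x P - (\<Sum>e\<in>set P. z e P)))"

text \<open>Value of a design (x,c): the minimum over interdictions (taken as infimum).\<close>
definition design_value ::
  "'e set \<Rightarrow> 'e list set \<Rightarrow> real \<Rightarrow> ('e list \<Rightarrow> real) \<Rightarrow> ('e \<Rightarrow> ereal) \<Rightarrow> real" where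
  "design_value A \<P> BI x c = (INF z\<in>{z. feasible_interdiction A \<P> BI c z}. val \<P> x z)"

definition design_optimal ::
  "'e set \<Rightarrow> 'e list set \<Rightarrow> ('e \<Rightarrow> real) \<Rightarrow> ('e \<Rightarrow> real) \<Rightarrow> real \<Rightarrow> real
     \<Rightarrow> ('e list \<Rightarrow> real) \<Rightarrow> ('e \<Rightarrow> ereal) \<Rightarrow> bool" where
  "design_optimal A \<P> u \<gamma> BF BI x c \<longleftrightarrow> feasible_design A \<P> u \<gamma> BF x c \<and>
     (\<forall>x' c'. feasible_design A \<P> u \<gamma> BF x' c' \<longrightarrow>
        design_value A \<P> BI x' c' \<le> design_value A \<P> BI x c)"

end

theory Submission
  imports Defs
begin

text \<open>Upper bound: against any design (x', c') the interdictor can remove the fraction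
  BI/BF \<cdot> \<gamma>_e of every path flow on every arc; this costs at most BI of the budget because
  the flow player spent at most BF protecting, and leaves exactly the LP_design objective of x'
  restricted to the paths with positive coefficient.
  Lower bound: give every arc with \<gamma>_e > 0 the same cost BF / W, where W = \<Sum>_e \<gamma>_e f_e is the
  protection weight of x; this exhausts the flow player's budget and charges the interdictor
  BF / W per unit stolen, so he can steal at most BI/BF \<cdot> W, which is what the LP objective of
  x already subtracts. Hence the design value of x equals the optimal LP value.\<close>

lemma finite_st_paths: "finite A \<Longrightarrow> finite (st_paths A tail head s t)"
  by (rule finite_subset[OF _ finite_subset_distinct])
     (auto simp: st_paths_def is_st_path_def distinct_map)

lemma st_path_arcs_subset: "P \<in> st_paths A tail head s t \<Longrightarrow> set P \<subseteq> A"
  by (auto simp: st_paths_def is_st_path_def)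

lemma sum_paths_arcs_swap:
  fixes g :: "'e \<Rightarrow> 'e list \<Rightarrow> real"
  assumes "finite A" "finite \<P>" "\<forall>P\<in>\<P>. set P \<subseteq> A"
  shows "(\<Sum>P\<in>\<P>. \<Sum>e\<in>set P. g e P) = (\<Sum>e\<in>A. \<Sum>P\<in>{P\<in>\<P>. e \<in> set P}. g e P)"
proof -
  have "(\<Sum>P\<in>\<P>. \<Sum>e\<in>set P. g e P) = (\<Sum>P\<in>\<P>. \<Sum>e\<in>{e\<in>A. e \<in> set P}. g e P)"
  proof (rule sum.cong[OF refl])
    fix P assume "P \<in> \<P>"
    then have "{e\<in>A. e \<in> set P} = set P" using assms(3) by blast
    then show "(\<Sum>e\<in>set P. g e P) = (\<Sum>e\<in>{e\<in>A. e \<in> set P}. g e P)" by simp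
  qed
  also have "\<dots> = (\<Sum>e\<in>A. \<Sum>P\<in>{P\<in>\<P>. e \<in> set P}. g e P)"
    using sum.swap_restrict[OF assms(2,1), of "\<lambda>P e. g e P" "\<lambda>P e. e \<in> set P"] by simp
  finally show ?thesis .
qed

lemma arc_flow_nonneg: "\<forall>P\<in>\<P>. 0 \<le> x P \<Longrightarrow> 0 \<le> arc_flow \<P> x e"
  by (auto simp: arc_flow_def intro: sum_nonneg)

lemma path_flow_le_arc_flow:
  assumes "finite \<P>" "\<forall>P\<in>\<P>. 0 \<le> x P" "P \<in> \<P>" "e \<in> set P"
  shows "x P \<le> arc_flow \<P> x e"
  unfolding arc_flow_def using assms by (intro member_le_sum) auto

lemma lp_design_obj_eq:
  assumes "finite A" "finite \<P>" "\<forall>P\<in>\<P>. set P \<subseteq> A"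
  shows "lp_design_obj \<P> \<gamma> BF BI x
           = (\<Sum>P\<in>\<P>. x P) - BI / BF * (\<Sum>e\<in>A. \<gamma> e * arc_flow \<P> x e)"
proof -
  have "(\<Sum>P\<in>\<P>. (\<Sum>e\<in>set P. \<gamma> e) * x P) = (\<Sum>P\<in>\<P>. \<Sum>e\<in>set P. \<gamma> e * x P)"
    by (simp add: sum_distrib_right)
  also have "\<dots> = (\<Sum>e\<in>A. \<gamma> e * arc_flow \<P> x e)"
    by (simp add: sum_paths_arcs_swap[OF assms] arc_flow_def sum_distrib_left)
  finally have weight: "(\<Sum>P\<in>\<P>. (\<Sum>e\<in>set P. \<gamma> e) * x P) = (\<Sum>e\<in>A. \<gamma> e * arc_flow \<P> x e)" .
  have "lp_design_obj \<P> \<gamma> BF BI x = (\<Sum>P\<in>\<P>. x P - BI / BF * ((\<Sum>e\<in>set P. \<gamma> e) * x P))"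
    unfolding lp_design_obj_def by (intro sum.cong refl) (simp add: algebra_simps)
  also have "\<dots> = (\<Sum>P\<in>\<P>. x P) - BI / BF * (\<Sum>P\<in>\<P>. (\<Sum>e\<in>set P. \<gamma> e) * x P)"
    by (simp add: sum_subtractf sum_distrib_left)
  finally show ?thesis unfolding weight .
qed

lemma val_ge_sum_residual: "(\<Sum>P\<in>\<P>. x P - (\<Sum>e\<in>set P. z e P)) \<le> val \<P> x z"
  unfolding val_def by (intro sum_mono) simp

lemma design_value_le_val:
  "feasible_interdiction A \<P> BI c z \<Longrightarrow> design_value A \<P> BI x c \<le> val \<P> x z"
  unfolding design_value_def
  by (rule cINF_lower) (auto intro!: bdd_belowI2[where m=0] simp: val_def sum_nonneg)

lemma design_value_ge:
  assumes "BI \<ge> 0" and "\<And>z. feasible_interdiction A \<P> BI c z \<Longrightarrow> v \<le> val \<P> x z"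
  shows "v \<le> design_value A \<P> BI x c"
proof -
  have "feasible_interdiction A \<P> BI c (\<lambda>e P. 0)"
    using assms(1) by (simp add: feasible_interdiction_def zero_ereal_def[symmetric])
  then show ?thesis
    unfolding design_value_def by (intro cINF_greatest) (auto intro: assms(2))
qed

definition proportional_interdiction ::
  "real \<Rightarrow> real \<Rightarrow> ('e \<Rightarrow> real) \<Rightarrow> ('e list \<Rightarrow> real) \<Rightarrow> 'e \<Rightarrow> 'e list \<Rightarrow> real" where
  "proportional_interdiction BF BI \<gamma> x e P = BI / BF * \<gamma> e * x P"

lemma feasible_flow_restrict:
  "feasible_flow A \<P> u x \<Longrightarrow> feasible_flow A \<P> u (\<lambda>P. if Q P then x P else 0)"
  unfolding feasible_flow_def arc_flow_def
  by (smt (verit, del_insts) mem_Collect_eq sum_mono)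

lemma feasible_interdiction_proportional:
  assumes "\<forall>e\<in>A. 0 \<le> \<gamma> e" "BF > 0" "BI \<ge> 0"
    and design: "feasible_design A \<P> u \<gamma> BF x c"
  shows "feasible_interdiction A \<P> BI c (proportional_interdiction BF BI \<gamma> x)"
proof -
  have xnn: "\<forall>P\<in>\<P>. 0 \<le> x P" and cnn: "\<forall>e\<in>A. 0 \<le> c e"
    and cfin: "\<forall>e\<in>A. \<gamma> e \<noteq> 0 \<longrightarrow> c e \<noteq> \<infinity>"
    and budget: "(\<Sum>e\<in>A. ereal (\<gamma> e) * c e * ereal (arc_flow \<P> x e)) \<le> ereal BF"
    using design by (auto simp: feasible_design_def feasible_flow_def)
  have stolen: "(\<Sum>P\<in>{P\<in>\<P>. e \<in> set P}. proportional_interdiction BF BI \<gamma> x e P)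
                  = BI / BF * (\<gamma> e * arc_flow \<P> x e)" for e
    by (simp add: proportional_interdiction_def arc_flow_def sum_distrib_left mult.assoc)
  have real_cost: "ereal (\<gamma> e) * c e * ereal (arc_flow \<P> x e)
          = ereal (\<gamma> e * real_of_ereal (c e) * arc_flow \<P> x e)"
    and real_stolen: "c e * ereal (BI / BF * (\<gamma> e * arc_flow \<P> x e))
          = ereal (BI / BF * (\<gamma> e * real_of_ereal (c e) * arc_flow \<P> x e))"
    if "e \<in> A" for e
    using that cnn cfin by (cases "c e"; auto)+
  have spent: "(\<Sum>e\<in>A. \<gamma> e * real_of_ereal (c e) * arc_flow \<P> x e) \<le> BF"
    using budget real_cost by (simp add: sum_ereal cong: sum.cong)
  have "(\<Sum>e\<in>A. c e * ereal (\<Sum>P\<in>{P\<in>\<P>. e \<in> set P}. proportional_interdiction BF BI \<gamma> x e P))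
      = ereal (BI / BF * (\<Sum>e\<in>A. \<gamma> e * real_of_ereal (c e) * arc_flow \<P> x e))"
    using real_stolen unfolding stolen sum_distrib_left by (simp add: sum_ereal cong: sum.cong)
  also have "\<dots> \<le> ereal (BI / BF * BF)"
    using mult_left_mono[OF spent, of "BI / BF"] assms(2,3) by simp
  also have "\<dots> = ereal BI"
    using assms(2) by simp
  finally show ?thesis
    using assms(1-3) xnn cfin
    by (auto simp: feasible_interdiction_def proportional_interdiction_def)
qed

lemma val_proportional_interdiction:
  assumes "\<forall>P\<in>\<P>. 0 \<le> x P"
  shows "val \<P> x (proportional_interdiction BF BI \<gamma> x)
           = lp_design_obj \<P> \<gamma> BF BI
               (\<lambda>P. if 0 < 1 - BI / BF * (\<Sum>e\<in>set P. \<gamma> e) then x P else 0)"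
  unfolding val_def lp_design_obj_def
proof (intro sum.cong refl)
  fix P assume "P \<in> \<P>"
  then have "0 \<le> x P" using assms by blast
  define a where "a = 1 - BI / BF * (\<Sum>e\<in>set P. \<gamma> e)"
  have "x P - (\<Sum>e\<in>set P. proportional_interdiction BF BI \<gamma> x e P) = a * x P"
  proof -
    have "(\<Sum>e\<in>set P. proportional_interdiction BF BI \<gamma> x e P) = BI / BF * x P * (\<Sum>e\<in>set P. \<gamma> e)"
      unfolding proportional_interdiction_def sum_distrib_left by (simp only: mult_ac)
    then show ?thesis by (simp add: a_def algebra_simps)
  qed
  moreover have "max 0 (a * x P) = a * (if 0 < a then x P else 0)"
    using \<open>0 \<le> x P\<close> mult_nonpos_nonneg[of a "x P"] by auto
  ultimately show "max 0 (x P - (\<Sum>e\<in>set P. proportional_interdiction BF BI \<gamma> x e P))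
      = (1 - BI / BF * (\<Sum>e\<in>set P. \<gamma> e))
          * (if 0 < 1 - BI / BF * (\<Sum>e\<in>set P. \<gamma> e) then x P else 0)"
    by (simp add: a_def)
qed

lemma design_value_le_lp_design_obj:
  assumes "\<forall>e\<in>A. 0 \<le> \<gamma> e" "BF > 0" "BI \<ge> 0" "feasible_design A \<P> u \<gamma> BF x c"
  obtains x' where "feasible_flow A \<P> u x'"
    and "design_value A \<P> BI x c \<le> lp_design_obj \<P> \<gamma> BF BI x'"
proof
  have flow: "feasible_flow A \<P> u x"
    using assms(4) by (simp add: feasible_design_def)
  then show "feasible_flow A \<P> u
      (\<lambda>P. if 0 < 1 - BI / BF * (\<Sum>e\<in>set P. \<gamma> e) then x P else 0)"
    by (rule feasible_flow_restrict)
  show "design_value A \<P> BI x c \<le> lp_design_obj \<P> \<gamma> BF BI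
      (\<lambda>P. if 0 < 1 - BI / BF * (\<Sum>e\<in>set P. \<gamma> e) then x P else 0)"
    using flow val_proportional_interdiction[of \<P> x BF BI \<gamma>]
      design_value_le_val[OF feasible_interdiction_proportional[OF assms], of x]
    by (simp add: feasible_flow_def)
qed

definition uniform_interdiction_cost :: "('e \<Rightarrow> real) \<Rightarrow> real \<Rightarrow> 'e \<Rightarrow> ereal" where
  "uniform_interdiction_cost \<gamma> k e = (if \<gamma> e = 0 then \<infinity> else ereal k)"

lemma feasible_design_uniform_cost:
  assumes "feasible_flow A \<P> u x" "0 \<le> k" "k * (\<Sum>e\<in>A. \<gamma> e * arc_flow \<P> x e) \<le> BF"
  shows "feasible_design A \<P> u \<gamma> BF x (uniform_interdiction_cost \<gamma> k)"
proof -
  have "(\<Sum>e\<in>A. ereal (\<gamma> e) * uniform_interdiction_cost \<gamma> k e * ereal (arc_flow \<P> x e))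
      = ereal (k * (\<Sum>e\<in>A. \<gamma> e * arc_flow \<P> x e))"
  proof -
    have "ereal (\<gamma> e) * uniform_interdiction_cost \<gamma> k e * ereal (arc_flow \<P> x e)
        = ereal (k * (\<gamma> e * arc_flow \<P> x e))" for e
      by (simp add: uniform_interdiction_cost_def zero_ereal_def[symmetric] mult_ac)
    then show ?thesis
      by (simp add: sum_ereal sum_distrib_left del: times_ereal.simps)
  qed
  then show ?thesis
    using assms by (simp add: feasible_design_def uniform_interdiction_cost_def)
qed

lemma uniform_cost_stolen_le:
  assumes "feasible_interdiction A \<P> BI (uniform_interdiction_cost \<gamma> k) z"
  shows "k * (\<Sum>e\<in>A. \<Sum>P\<in>{P\<in>\<P>. e \<in> set P}. z e P) \<le> BI"
proof -
  have real_cost: "uniform_interdiction_cost \<gamma> k e * ereal (\<Sum>P\<in>{P\<in>\<P>. e \<in> set P}. z e P)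
      = ereal (k * (\<Sum>P\<in>{P\<in>\<P>. e \<in> set P}. z e P))" if "e \<in> A" for e
  proof (cases "\<gamma> e = 0")
    case True
    then have "(\<Sum>P\<in>{P\<in>\<P>. e \<in> set P}. z e P) = 0"
      using assms that by (intro sum.neutral) (auto simp: feasible_interdiction_def uniform_interdiction_cost_def)
    then show ?thesis by (simp add: zero_ereal_def[symmetric])
  qed (simp add: uniform_interdiction_cost_def)
  have "(\<Sum>e\<in>A. uniform_interdiction_cost \<gamma> k e * ereal (\<Sum>P\<in>{P\<in>\<P>. e \<in> set P}. z e P))
      = ereal (k * (\<Sum>e\<in>A. \<Sum>P\<in>{P\<in>\<P>. e \<in> set P}. z e P))"
  proof -
    have "(\<Sum>e\<in>A. uniform_interdiction_cost \<gamma> k e * ereal (\<Sum>P\<in>{P\<in>\<P>. e \<in> set P}. z e P))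
        = (\<Sum>e\<in>A. ereal (k * (\<Sum>P\<in>{P\<in>\<P>. e \<in> set P}. z e P)))"
      by (rule sum.cong[OF refl real_cost])
    then show ?thesis by (simp only: sum_ereal sum_distrib_left)
  qed
  then show ?thesis
    using assms unfolding feasible_interdiction_def by simp
qed

lemma lp_design_obj_le_val_weighted:
  assumes "finite A" "finite \<P>" "\<forall>P\<in>\<P>. set P \<subseteq> A" "BF > 0"
    and W: "W = (\<Sum>e\<in>A. \<gamma> e * arc_flow \<P> x e)" "W > 0"
    and "feasible_interdiction A \<P> BI (uniform_interdiction_cost \<gamma> (BF / W)) z"
  shows "lp_design_obj \<P> \<gamma> BF BI x \<le> val \<P> x z"
proof -
  define stolen where "stolen = (\<Sum>e\<in>A. \<Sum>P\<in>{P\<in>\<P>. e \<in> set P}. z e P)"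
  have "BF / W * stolen \<le> BI"
    unfolding stolen_def by (rule uniform_cost_stolen_le[OF assms(7)])
  then have "stolen \<le> BI / BF * W"
    using assms(4) \<open>W > 0\<close> by (simp add: field_simps)
  moreover have "(\<Sum>P\<in>\<P>. x P - (\<Sum>e\<in>set P. z e P)) = (\<Sum>P\<in>\<P>. x P) - stolen"
    by (simp add: stolen_def sum_subtractf sum_paths_arcs_swap[OF assms(1-3)])
  ultimately show ?thesis
    using val_ge_sum_residual[where \<P> = \<P> and x = x and z = z]
      lp_design_obj_eq[OF assms(1-3), of \<gamma> BF BI x] W(1) by simp
qed

text \<open>If the flow avoids every arc of positive \<gamma>, it only uses arcs of infinite cost and
  cannot be interdicted at all, whatever k is.\<close>

lemma lp_design_obj_le_val_unweighted:
  assumes "finite A" "finite \<P>" "\<forall>P\<in>\<P>. set P \<subseteq> A" "\<forall>e\<in>A. 0 \<le> \<gamma> e"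
    and flow: "\<forall>P\<in>\<P>. 0 \<le> x P" and W: "(\<Sum>e\<in>A. \<gamma> e * arc_flow \<P> x e) = 0"
    and z: "feasible_interdiction A \<P> BI (uniform_interdiction_cost \<gamma> k) z"
  shows "lp_design_obj \<P> \<gamma> BF BI x \<le> val \<P> x z"
proof -
  have unused: "\<gamma> e * arc_flow \<P> x e = 0" if "e \<in> A" for e
  proof -
    have "\<forall>e\<in>A. 0 \<le> \<gamma> e * arc_flow \<P> x e"
      using assms(4) arc_flow_nonneg[OF flow] by simp
    then have "\<forall>e\<in>A. \<gamma> e * arc_flow \<P> x e = 0"
      using W by (simp add: sum_nonneg_eq_0_iff[OF assms(1)])
    then show ?thesis
      using that by blast
  qed
  have "x P \<le> max 0 (x P - (\<Sum>e\<in>set P. z e P))" if P: "P \<in> \<P>" for P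
  proof (cases "x P > 0")
    case True
    have "z e P = 0" if "e \<in> set P" for e
    proof -
      have "e \<in> A" using assms(3) P that by blast
      moreover have "x P \<le> arc_flow \<P> x e"
        using path_flow_le_arc_flow[OF assms(2) flow P that] .
      ultimately have "\<gamma> e = 0"
        using unused[OF \<open>e \<in> A\<close>] True by (simp add: mult_eq_0_iff)
      then show ?thesis
        using z P \<open>e \<in> A\<close> by (simp add: feasible_interdiction_def uniform_interdiction_cost_def)
    qed
    then show ?thesis by simp
  qed simp
  then have "(\<Sum>P\<in>\<P>. x P) \<le> val \<P> x z"
    unfolding val_def by (rule sum_mono)
  then show ?thesis
    using lp_design_obj_eq[OF assms(1-3), of \<gamma> BF BI x] W by simp
qed

lemma design_value_ge_lp_design_obj:
  assumes "finite A" "finite \<P>" "\<forall>P\<in>\<P>. set P \<subseteq> A" "\<forall>e\<in>A. 0 \<le> \<gamma> e"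
    and "BF > 0" "BI \<ge> 0" and flow: "feasible_flow A \<P> u x"
  obtains c where "feasible_design A \<P> u \<gamma> BF x c"
    and "lp_design_obj \<P> \<gamma> BF BI x \<le> design_value A \<P> BI x c"
proof -
  define W where "W = (\<Sum>e\<in>A. \<gamma> e * arc_flow \<P> x e)"
  define k where "k = (if W = 0 then 1 else BF / W)"
  have xnn: "\<forall>P\<in>\<P>. 0 \<le> x P"
    using flow by (simp add: feasible_flow_def)
  have "0 \<le> W"
    unfolding W_def using assms(4) arc_flow_nonneg[OF xnn] by (simp add: sum_nonneg)
  then have "0 \<le> k"
    using \<open>BF > 0\<close> by (simp add: k_def)
  moreover have "k * W \<le> BF"
    using \<open>BF > 0\<close> by (cases "W = 0") (simp_all add: k_def)
  ultimately have "feasible_design A \<P> u \<gamma> BF x (uniform_interdiction_cost \<gamma> k)"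
    unfolding W_def by (rule feasible_design_uniform_cost[OF flow])
  moreover have "lp_design_obj \<P> \<gamma> BF BI x \<le> val \<P> x z"
    if "feasible_interdiction A \<P> BI (uniform_interdiction_cost \<gamma> k) z" for z
  proof (cases "W = 0")
    case True
    then show ?thesis
      using lp_design_obj_le_val_unweighted[OF assms(1-4) xnn _ that] by (simp add: W_def)
  next
    case False
    then have "0 < W" "k = BF / W"
      using \<open>0 \<le> W\<close> by (auto simp: k_def)
    then show ?thesis
      using lp_design_obj_le_val_weighted[OF assms(1-3,5) W_def] that by blast
  qed
  then have "lp_design_obj \<P> \<gamma> BF BI x \<le> design_value A \<P> BI x (uniform_interdiction_cost \<gamma> k)"
    by (rule design_value_ge[OF \<open>BI \<ge> 0\<close>])
  ultimately show ?thesis by (rule that)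
qed

theorem theorem2:
  fixes A :: "'e set" and tail head :: "'e \<Rightarrow> 'v" and s t :: 'v
    and u \<gamma> :: "'e \<Rightarrow> real" and BF BI :: real and x :: "'e list \<Rightarrow> real"
  assumes "finite A"
    and "\<forall>e\<in>A. 0 \<le> u e"
    and "\<forall>e\<in>A. 0 \<le> \<gamma> e"
    and "BF > 0" and "BI \<ge> 0"
    and "lp_design_optimal A (st_paths A tail head s t) u \<gamma> BF BI x"
  shows "\<exists>c. design_optimal A (st_paths A tail head s t) u \<gamma> BF BI x c"
proof -
  let ?\<P> = "st_paths A tail head s t"
  have paths: "finite ?\<P>" "\<forall>P\<in>?\<P>. set P \<subseteq> A"
    by (simp_all add: finite_st_paths[OF assms(1)] st_path_arcs_subset)
  have flow: "feasible_flow A ?\<P> u x"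
    and lp_opt: "\<And>x'. feasible_flow A ?\<P> u x' \<Longrightarrow>
        lp_design_obj ?\<P> \<gamma> BF BI x' \<le> lp_design_obj ?\<P> \<gamma> BF BI x"
    using assms(6) by (simp_all add: lp_design_optimal_def)
  obtain c where design: "feasible_design A ?\<P> u \<gamma> BF x c"
    and lower: "lp_design_obj ?\<P> \<gamma> BF BI x \<le> design_value A ?\<P> BI x c"
    using design_value_ge_lp_design_obj[OF assms(1) paths assms(3-5) flow] .
  have "design_value A ?\<P> BI x' c' \<le> design_value A ?\<P> BI x c"
    if design': "feasible_design A ?\<P> u \<gamma> BF x' c'" for x' c'
  proof -
    obtain x'' where flow'': "feasible_flow A ?\<P> u x''"
      and upper: "design_value A ?\<P> BI x' c' \<le> lp_design_obj ?\<P> \<gamma> BF BI x''"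
      using design_value_le_lp_design_obj[OF assms(3-5) design'] .
    show ?thesis
      using upper lp_opt[OF flow''] lower by linarith
  qed
  then show ?thesis
    unfolding design_optimal_def using design by blast
qed

end
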